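(* Let $F$ be an algebraically closed field of characteristic $\neq 2$, $R=F[t]$ with the involution ${}^*$ described in the context, and let $A\in M_n(R)$ satisfy $A^*=A$ and $\gcd(A)=1$. Then there exists a column vector $v\in R^n$ such that $v^*Av=1$.
   Context: $R=F[t]$ is the polynomial ring over $F$, and ${}^*$ is the $F$-algebra involution of $R$ that is the identity on $F$ and sends $t$ to $-t$. For a matrix (or column vector) $A=(a_{ij})$ over $R$, $A^*$ is the transpose of the matrix obtained by applying ${}^*$ entrywise. $\gcd(A)$ denotes the monic generator (or $0$) of the ideal of $R$ generated by all entries of $A$. *)

theory Defs
  imports "HOL-Computational_Algebra.Computational_Algebra"
begin

definition pstar :: "'a::comm_ring_1 poly \<Rightarrow> 'a poly" where
  "pstar p = pcompose p [:0, -1:]"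

text \<open>n x n matrices over R as functions nat => nat => R (indices < n), column vectors as nat => R.
  A^* = A means A i j = (A j i)^* for all i, j < n.\<close>
definition self_adjoint :: "nat \<Rightarrow> (nat \<Rightarrow> nat \<Rightarrow> 'a::comm_ring_1 poly) \<Rightarrow> bool" where
  "self_adjoint n A \<longleftrightarrow> (\<forall>i<n. \<forall>j<n. A i j = pstar (A j i))"

definition mat_gcd :: "nat \<Rightarrow> (nat \<Rightarrow> nat \<Rightarrow> 'a::field_gcd poly) \<Rightarrow> 'a poly" where
  "mat_gcd n A = Gcd {A i j | i j. i < n \<and> j < n}"

definition herm_form :: "nat \<Rightarrow> (nat \<Rightarrow> nat \<Rightarrow> 'a::comm_ring_1 poly) \<Rightarrow> (nat \<Rightarrow> 'a poly) \<Rightarrow> 'a poly" where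
  "herm_form n A v = (\<Sum>i<n. \<Sum>j<n. pstar (v i) * A i j * v j)"

end

theory Submission
  imports Defs
begin

text \<open>Write \<open><u, v> = u\<^sup>* A v\<close>, so that \<open>v\<^sup>* A v = <v, v>\<close>. A nonzero value \<open><x, y>\<close> of
  minimal degree divides every entry of \<open>A\<close>, as Euclidean division would otherwise produce a value
  of smaller degree. So \<open>gcd(A) = 1\<close> gives \<open><x, y> = 1\<close>, and it remains to represent \<open>1\<close> by the
  binary form with Gram matrix \<open>[[a, 1], [1, d]]\<close>, \<open>a = <x, x>\<close>, \<open>d = <y, y>\<close>.

  If \<open><e, e> = 0\<close> and \<open>1 - <z, z>\<close> lies in the ideal generated by \<open>c = <e, z>\<close> and \<open>c\<^sup>*\<close>, then
  \<open>z + r\<^sup>* e\<close> represents \<open>1\<close> for a suitable \<open>r\<close>, since in characteristic \<open>\<noteq> 2\<close> every invariant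
  polynomial \<open>X\<close> is the trace \<open>X/2 + (X/2)\<^sup>*\<close>. Over an algebraically closed field every invariant
  polynomial, i.e. every polynomial in \<open>t\<^sup>2\<close>, is a norm \<open>w\<^sup>* w\<close>. Writing \<open>1 - a d = w\<^sup>* w\<close>
  yields the isotropic vectors \<open>e = (V w - V\<^sup>*) x + a V\<^sup>* y\<close>, with \<open><e, y> = w\<^sup>* (V\<^sup>* - V w)\<close>.
  For \<open>V = 1 + \<tau> t\<close> with \<open>\<tau>\<close> outside a finite set, and \<open>z = k y\<close> where the norm \<open>k\<^sup>* k\<close>
  inverts \<open>d\<close> modulo \<open>t\<^sup>j\<close>, the pairing \<open><e, z>\<close> is \<open>t\<^sup>j\<close> times a polynomial coprime to its
  conjugate, while \<open>t\<^sup>j\<close> divides \<open>1 - <z, z> = 1 - d k\<^sup>* k\<close>; here \<open>t\<^bsup>2j\<^esup>\<close> is the power of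
  \<open>t\<close> dividing \<open>1 - a d\<close>. The cases \<open>a = 0\<close>, \<open>d = 0\<close> and \<open>a d = 1\<close> are immediate.\<close>

lemma pstar_add [simp]: "pstar (p + q) = pstar p + pstar q"
  by (simp add: pstar_def pcompose_add)

lemma pstar_mult [simp]: "pstar (p * q) = pstar p * pstar q"
  by (simp add: pstar_def pcompose_mult)

lemma pstar_uminus [simp]: "pstar (- p) = - pstar p"
  by (simp add: pstar_def pcompose_uminus)

lemma pstar_diff [simp]: "pstar (p - q) = pstar p - pstar q"
  by (simp add: pstar_def pcompose_diff)

lemma pstar_smult [simp]: "pstar (smult c p) = smult c (pstar p)"
  by (simp add: pstar_def pcompose_smult)

lemma pstar_pCons: "pstar (pCons a p) = [:a:] + [:0, -1:] * pstar p"
  by (simp add: pstar_def pcompose_pCons)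

lemma pstar_0 [simp]: "pstar 0 = 0"
  by (simp add: pstar_def)

lemma pstar_const [simp]: "pstar [:c:] = [:c:]"
  by (simp add: pstar_def)

lemma pstar_1 [simp]: "pstar 1 = 1"
  using pstar_const[of 1] by (simp add: one_pCons)

lemma pstar_monom_1 [simp]: "pstar [:0, c:] = [:0, -c:]"
  by (simp add: pstar_pCons)

lemma pstar_of_bool [simp]: "pstar (of_bool P) = of_bool P"
  by simp

lemma pstar_power [simp]: "pstar (p ^ k) = pstar p ^ k"
  by (induction k) auto

lemma pstar_sum: "pstar (sum f A) = (\<Sum>x\<in>A. pstar (f x))"
  by (induction A rule: infinite_finite_induct) auto

lemma poly_pstar [simp]: "poly (pstar p) x = poly p (- x)"
  by (simp add: pstar_def poly_pcompose)

lemma pstar_pstar [simp]: "pstar (pstar p) = p"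
proof -
  have "pstar (pstar p) = p \<circ>\<^sub>p ([:0, -1:] \<circ>\<^sub>p [:0, -1:])"
    by (simp add: pstar_def pcompose_assoc)
  also have "[:0, -1:] \<circ>\<^sub>p [:0, -1:] = ([:0, 1:] :: 'a poly)"
    by (simp add: pcompose_pCons)
  finally show ?thesis
    by (simp add: pcompose_idR)
qed

lemma poly_norm_0: "poly (pstar z * z) 0 = poly z 0 ^ 2"
  by (simp add: power2_eq_square)

section \<open>Hermitian products\<close>

definition herm_prod :: "nat \<Rightarrow> (nat \<Rightarrow> nat \<Rightarrow> 'a::comm_ring_1 poly) \<Rightarrow>
    (nat \<Rightarrow> 'a poly) \<Rightarrow> (nat \<Rightarrow> 'a poly) \<Rightarrow> 'a poly"
  where "herm_prod n A u v = (\<Sum>i<n. \<Sum>j<n. pstar (u i) * A i j * v j)"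

definition unit_vec :: "nat \<Rightarrow> nat \<Rightarrow> 'a::comm_ring_1 poly" where
  "unit_vec i = (\<lambda>k. of_bool (k = i))"

lemma herm_form_eq_herm_prod: "herm_form n A v = herm_prod n A v v"
  by (simp add: herm_form_def herm_prod_def)

lemma herm_prod_lin_right:
  "herm_prod n A u (\<lambda>k. p * v k + q * w k) = p * herm_prod n A u v + q * herm_prod n A u w"
  by (simp add: herm_prod_def algebra_simps sum.distrib sum_distrib_left)

lemma herm_prod_lin_left:
  "herm_prod n A (\<lambda>k. p * v k + q * w k) u = pstar p * herm_prod n A v u + pstar q * herm_prod n A w u"
  by (simp add: herm_prod_def algebra_simps sum.distrib sum_distrib_left)

lemma herm_prod_scale_right: "herm_prod n A u (\<lambda>k. p * v k) = p * herm_prod n A u v"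
  by (simp add: herm_prod_def algebra_simps sum_distrib_left)

lemma herm_prod_scale_left: "herm_prod n A (\<lambda>k. p * v k) u = pstar p * herm_prod n A v u"
  by (simp add: herm_prod_def algebra_simps sum_distrib_left)

lemma herm_prod_unit_vec:
  assumes "i < n" "j < n"
  shows "herm_prod n A (unit_vec i) (unit_vec j) = A i j"
proof -
  have "(\<Sum>l<n. A k l * unit_vec j l) = A k j" for k
    using assms by (simp add: unit_vec_def sum.If_cases lessThan_def)
  then show ?thesis
    using assms
    by (simp add: herm_prod_def unit_vec_def sum_distrib_left[symmetric] mult.assoc sum.If_cases lessThan_def)
qed

lemma herm_prod_commute:
  assumes "self_adjoint n A"
  shows "herm_prod n A v u = pstar (herm_prod n A u v)"
proof -
  have "pstar (herm_prod n A u v) = (\<Sum>i<n. \<Sum>j<n. u i * pstar (A i j) * pstar (v j))"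
    by (simp add: herm_prod_def pstar_sum)
  also have "\<dots> = (\<Sum>i<n. \<Sum>j<n. u i * A j i * pstar (v j))"
    using assms unfolding self_adjoint_def by (intro sum.cong refl) (metis lessThan_iff pstar_pstar)
  also have "\<dots> = herm_prod n A v u"
    unfolding herm_prod_def by (subst sum.swap) (simp add: mult_ac)
  finally show ?thesis ..
qed

lemma pstar_herm_form:
  assumes "self_adjoint n A"
  shows "pstar (herm_form n A v) = herm_form n A v"
  using herm_prod_commute[OF assms, of v v] by (simp add: herm_form_eq_herm_prod)

lemma min_degree_herm_prod_dvd:
  fixes A :: "nat \<Rightarrow> nat \<Rightarrow> 'a::field poly"
  assumes min: "\<And>x' y'. herm_prod n A x' y' \<noteq> 0 \<Longrightarrow> degree g \<le> degree (herm_prod n A x' y')"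
    and "g \<noteq> 0" and g: "herm_prod n A x y = g"
  shows "g dvd herm_prod n A x u" and "g dvd herm_prod n A u y"
proof -
  have dvd_if_mod: "g dvd r" if "herm_prod n A x' y' = r mod g" for r x' y'
  proof (rule ccontr)
    assume "\<not> g dvd r"
    then have "r mod g \<noteq> 0"
      by (simp add: mod_eq_0_iff_dvd)
    then have "degree (r mod g) < degree g" and "degree g \<le> degree (r mod g)"
      using min[of x' y'] degree_mod_less'[OF \<open>g \<noteq> 0\<close>] that by simp_all
    then show False
      by simp
  qed
  show "g dvd herm_prod n A x u"
  proof (rule dvd_if_mod)
    let ?r = "herm_prod n A x u"
    show "herm_prod n A x (\<lambda>k. 1 * u k + (- (?r div g)) * y k) = ?r mod g"
      unfolding herm_prod_lin_right g by (simp add: minus_div_mult_eq_mod[symmetric] algebra_simps)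
  qed
  show "g dvd herm_prod n A u y"
  proof (rule dvd_if_mod)
    let ?r = "herm_prod n A u y"
    show "herm_prod n A (\<lambda>k. 1 * u k + (- pstar (?r div g)) * x k) y = ?r mod g"
      unfolding herm_prod_lin_left g by (simp add: minus_div_mult_eq_mod[symmetric] algebra_simps)
  qed
qed

lemma herm_prod_eq_1_if_mat_gcd_eq_1:
  fixes A :: "nat \<Rightarrow> nat \<Rightarrow> 'a::field_gcd poly"
  assumes "mat_gcd n A = 1"
  shows "\<exists>x y. herm_prod n A x y = 1"
proof -
  have "\<exists>x y. herm_prod n A x y \<noteq> 0"
  proof (rule ccontr)
    assume "\<not> ?thesis"
    then have "A i j = 0" if "i < n" "j < n" for i j
      using herm_prod_unit_vec[OF that, of A] by simp
    then have "{A i j | i j. i < n \<and> j < n} \<subseteq> {0}"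
      by blast
    then have "Gcd {A i j | i j. i < n \<and> j < n} = 0"
      by (simp add: Gcd_0_iff)
    with assms show False
      by (simp add: mat_gcd_def)
  qed
  then obtain x0 y0 where "herm_prod n A x0 y0 \<noteq> 0"
    by blast
  from ex_has_least_nat[of "\<lambda>(x, y). herm_prod n A x y \<noteq> 0" "(x0, y0)"
      "\<lambda>(x, y). degree (herm_prod n A x y)"]
  obtain x y where g0: "herm_prod n A x y \<noteq> 0"
    and min: "\<And>x' y'. herm_prod n A x' y' \<noteq> 0 \<Longrightarrow>
                degree (herm_prod n A x y) \<le> degree (herm_prod n A x' y')"
    using \<open>herm_prod n A x0 y0 \<noteq> 0\<close> by auto
  define g where "g = herm_prod n A x y"
  then have g_xy: "herm_prod n A x y = g"
    by simp
  have g_dvd: "g dvd herm_prod n A x' u" "g dvd herm_prod n A u y'"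
    if "herm_prod n A x' y' = g" for x' y' u
    using min_degree_herm_prod_dvd[of n A g x' y' u] min g0 that by (simp_all add: g_def)
  have "g dvd A i j" if "i < n" "j < n" for i j
  proof -
    obtain k where k: "herm_prod n A (unit_vec i) y = g * k"
      using g_dvd(2)[OF g_xy, of "unit_vec i"] by (elim dvdE)
    define x' where "x' = (\<lambda>l. (1 - pstar k) * x l + 1 * unit_vec i l)"
    have "herm_prod n A x' y = g"
      unfolding x'_def herm_prod_lin_left by (simp add: k g_xy algebra_simps)
    then have "g dvd herm_prod n A x' (unit_vec j)"
      by (rule g_dvd(1))
    also have "herm_prod n A x' (unit_vec j) = (1 - k) * herm_prod n A x (unit_vec j) + A i j"
      unfolding x'_def herm_prod_lin_left by (simp add: herm_prod_unit_vec that)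
    finally show ?thesis
      using g_dvd(1)[OF g_xy, of "unit_vec j"] by (simp add: dvd_add_right_iff)
  qed
  then have "g dvd mat_gcd n A"
    unfolding mat_gcd_def by (auto intro: Gcd_greatest)
  then have "g dvd 1"
    using assms by simp
  then obtain u where "1 = g * u"
    by (elim dvdE)
  then have "herm_prod n A x (\<lambda>l. u * y l) = 1"
    by (simp add: herm_prod_scale_right g_xy mult.commute)
  then show ?thesis
    by blast
qed

section \<open>Invariant polynomials as norms\<close>

definition sqrt_choice :: "'a::alg_closed_field \<Rightarrow> 'a" where
  "sqrt_choice c = (SOME r. r ^ 2 = c)"

lemma sqrt_choice_square [simp]: "sqrt_choice c ^ 2 = c"
  unfolding sqrt_choice_def by (rule someI_ex) (rule nth_root_exists, simp)

lemma sqrt_choice_mult_self [simp]: "sqrt_choice c * sqrt_choice c = c"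
  using sqrt_choice_square[of c] by (simp only: power2_eq_square)

lemma sqrt_choice_eq_0_iff [simp]: "sqrt_choice c = 0 \<longleftrightarrow> c = 0"
  by (metis mult_eq_0_iff sqrt_choice_mult_self)

text \<open>Of each pair \<open>\<plusminus>b\<close> of nonzero numbers at most one is a root. Unlike the mere absence
  of opposite roots, this is preserved by products.\<close>
definition half_roots :: "'a::alg_closed_field poly \<Rightarrow> bool" where
  "half_roots p \<longleftrightarrow> (\<forall>b. poly p b = 0 \<longrightarrow> sqrt_choice (b ^ 2) = b)"

lemma half_roots_mult: "half_roots p \<Longrightarrow> half_roots q \<Longrightarrow> half_roots (p * q)"
  by (auto simp: half_roots_def)

lemma half_roots_opposite_root:
  fixes p :: "'a::alg_closed_field poly"
  assumes "(2::'a) \<noteq> 0" and "half_roots p" and "poly p 0 \<noteq> 0" and "poly p b = 0"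
  shows "poly p (- b) \<noteq> 0"
proof
  assume "poly p (- b) = 0"
  then have "b = - b"
    using assms(2,4) unfolding half_roots_def by (metis power2_minus)
  with assms(1) have "b = 0"
    by (metis add.inverse_inverse mult_2 neg_eq_iff_add_eq_0 no_zero_divisors)
  with assms(3,4) show False
    by simp
qed

lemma pstar_invariant_split_X_power:
  fixes E :: "'a::field poly"
  assumes "(2::'a) \<noteq> 0" and "pstar E = E" and "E \<noteq> 0"
  shows "\<exists>j E1. E = [:0, 0, 1:] ^ j * E1 \<and> pstar E1 = E1 \<and> poly E1 0 \<noteq> 0"
  using assms(2,3)
proof (induction "degree E" arbitrary: E rule: less_induct)
  case (less E)
  show ?case
  proof (cases "poly E 0 = 0")
    case False
    with less.prems show ?thesis
      by (intro exI[of _ 0] exI[of _ E]) auto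
  next
    case True
    then obtain E' where E': "E = [:0, 1:] * E'"
      by (metis dvdE minus_zero poly_eq_0_iff_dvd)
    have "pCons 0 (- pstar E') = pCons 0 E'"
      using less.prems(1) by (simp add: E' pstar_pCons)
    then have pE': "pstar E' = - E'"
      by (metis minus_minus pCons_eq_iff)
    then have "2 * poly E' 0 = 0"
      using poly_pstar[of E' 0] by (simp add: algebra_simps)
    with assms(1) obtain E'' where E'': "E' = [:0, 1:] * E''"
      by (metis dvdE minus_zero mult_eq_0_iff poly_eq_0_iff_dvd)
    have EE: "E = [:0, 0, 1:] * E''"
      by (simp add: E' E'')
    have pE'': "pstar E'' = E''"
      using pE' by (simp add: E'' pstar_pCons)
    have "E'' \<noteq> 0"
      using less.prems(2) EE by auto
    then have "degree E'' < degree E"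
      unfolding EE by (subst degree_mult_eq) auto
    from less.hyps[OF this pE'' \<open>E'' \<noteq> 0\<close>] obtain j E1 where
      "E'' = [:0, 0, 1:] ^ j * E1" "pstar E1 = E1" "poly E1 0 \<noteq> 0"
      by blast
    then show ?thesis
      by (intro exI[of _ "Suc j"] exI[of _ E1]) (simp add: EE mult_ac)
  qed
qed

lemma pstar_invariant_root_factor:
  fixes h :: "'a::alg_closed_field poly"
  assumes two: "(2::'a) \<noteq> 0" and "pstar h = h" and "poly h 0 \<noteq> 0" and "poly h b = 0"
  shows "\<exists>L h2. h = pstar L * L * h2 \<and> half_roots L \<and> pstar h2 = h2 \<and> degree h = degree h2 + 2"
proof -
  have even: "poly h (- x) = poly h x" for x
    using poly_pstar[of h x] assms(2) by simp
  define g where "g = sqrt_choice (b ^ 2)"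
  have g2: "g ^ 2 = b ^ 2"
    by (simp add: g_def)
  then have "g = b \<or> g = - b"
    by (simp add: power2_eq_iff)
  then have hg: "poly h g = 0" "poly h (- g) = 0"
    using assms(4) even by auto
  have "g \<noteq> 0"
    using assms(3) hg by auto
  obtain h1 where h1: "h = [:-g, 1:] * h1"
    using hg(1) by (auto simp: poly_eq_0_iff_dvd elim: dvdE)
  have "- (2 * g) * poly h1 (- g) = 0"
    using hg(2) by (simp add: h1)
  then have "poly h1 (- g) = 0"
    using two \<open>g \<noteq> 0\<close> by simp
  then have "[:- (- g), 1:] dvd h1"
    by (simp only: poly_eq_0_iff_dvd)
  then obtain h2 where h2: "h1 = [:g, 1:] * h2"
    by (auto elim: dvdE)
  text \<open>With \<open>k\<^sup>2 = -1\<close>, the linear factor \<open>L = k (t - g)\<close> has norm \<open>t\<^sup>2 - g\<^sup>2\<close>.\<close>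
  define k where "k = sqrt_choice (-1 :: 'a)"
  define L where "L = [:- (k * g), k:]"
  have "k \<noteq> 0"
    by (simp add: k_def)
  define q where "q = [:- (g * g), 0, 1:]"
  have q: "pstar q = q" "q \<noteq> 0"
    by (simp_all add: q_def pstar_pCons)
  have NL: "pstar L * L = q"
    by (simp add: L_def q_def pstar_pCons k_def algebra_simps)
  then have hL: "h = pstar L * L * h2"
    by (simp add: h1 h2 q_def algebra_simps)
  have "half_roots L"
  proof (unfold half_roots_def, intro allI impI)
    fix x
    assume "poly L x = 0"
    with \<open>k \<noteq> 0\<close> have "x = g"
      by (simp add: L_def algebra_simps)
    then show "sqrt_choice (x ^ 2) = x"
      using g2 by (simp add: g_def)
  qed
  have "q * pstar h2 = q * h2"
    using assms(2) unfolding hL NL pstar_mult q(1) .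
  then have "pstar h2 = h2"
    using q(2) by simp
  have "h2 \<noteq> 0"
    using assms(3) hL by auto
  then have "degree h = degree h2 + 2"
    unfolding hL NL using q(2) by (subst degree_mult_eq) (simp_all add: q_def)
  with hL \<open>half_roots L\<close> \<open>pstar h2 = h2\<close> show ?thesis
    by blast
qed

lemma pstar_invariant_eq_norm:
  fixes h :: "'a::alg_closed_field poly"
  assumes two: "(2::'a) \<noteq> 0" and "pstar h = h" and "poly h 0 \<noteq> 0"
  shows "\<exists>z. pstar z * z = h \<and> half_roots z"
  using assms(2,3)
proof (induction "degree h" arbitrary: h rule: less_induct)
  case (less h)
  show ?case
  proof (cases "degree h = 0")
    case True
    then obtain c where h: "h = [:c:]"
      by (elim degree_eq_zeroE)
    with less.prems have "half_roots [:sqrt_choice c:]"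
      by (simp add: half_roots_def)
    moreover have "pstar [:sqrt_choice c:] * [:sqrt_choice c:] = h"
      by (simp add: h)
    ultimately show ?thesis
      by blast
  next
    case False
    then obtain b where "poly h b = 0"
      using alg_closed_imp_poly_has_root by blast
    then obtain L h2 where hL: "h = pstar L * L * h2" and "half_roots L"
      and "pstar h2 = h2" and "degree h = degree h2 + 2"
      using pstar_invariant_root_factor[OF two less.prems] by blast
    moreover have "poly h2 0 \<noteq> 0"
      using less.prems(2) hL by auto
    ultimately obtain z2 where "pstar z2 * z2 = h2" "half_roots z2"
      using less.hyps[of h2] by auto
    then have "pstar (L * z2) * (L * z2) = h" "half_roots (L * z2)"
      using hL \<open>half_roots L\<close> by (simp_all add: half_roots_mult mult_ac)
    then show ?thesis
      by blast
  qed
qed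

lemma bezout_if_no_common_root:
  fixes p q :: "'a::{alg_closed_field,field_gcd} poly"
  assumes "p \<noteq> 0" and "\<And>x. poly p x = 0 \<Longrightarrow> poly q x \<noteq> 0"
  shows "\<exists>u v. u * p + v * q = 1"
proof -
  have "degree (gcd p q) = 0"
  proof (rule ccontr)
    assume "degree (gcd p q) \<noteq> 0"
    then obtain z where "poly (gcd p q) z = 0"
      using alg_closed_imp_poly_has_root by blast
    then have "poly p z = 0" "poly q z = 0"
      by (meson dvd_trans gcd_dvd1 gcd_dvd2 poly_eq_0_iff_dvd)+
    with assms(2) show False
      by blast
  qed
  then have "gcd p q = 1"
    using assms(1) by (metis gcd_eq_0_iff is_unit_iff_degree is_unit_normalize normalize_gcd)
  then show ?thesis
    using bezout_coefficients_fst_snd[of p q] by metis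
qed

section \<open>Representing 1 by a binary form\<close>

lemma smult_half_double:
  fixes p :: "'a::field poly"
  assumes "(2::'a) \<noteq> 0"
  shows "smult (1/2) (p + p) = p"
proof -
  have "smult (1/2) (p + p) = smult (1/2 + 1/2) p"
    by (simp only: smult_add_right smult_add_left)
  also have "1/2 + 1/2 = (1::'a)"
    using assms by (simp add: add_divide_distrib[symmetric])
  finally show ?thesis
    by simp
qed

lemma herm_form_eq_1_if_isotropic:
  fixes A :: "nat \<Rightarrow> nat \<Rightarrow> 'a::field poly"
  assumes two: "(2::'a) \<noteq> 0" and sa: "self_adjoint n A"
    and iso: "herm_form n A e = 0"
    and X: "1 - herm_form n A z = herm_prod n A e z * r1 + pstar (herm_prod n A e z) * r2"
  shows "\<exists>v. herm_form n A v = 1"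
proof -
  define c where "c = herm_prod n A e z"
  define X where "X = 1 - herm_form n A z"
  define \<rho> where "\<rho> = smult (1/2) (r1 + pstar r2)"
  have X_c: "X = c * r1 + pstar c * r2"
    using X by (simp add: X_def c_def)
  have "pstar X = X"
    using pstar_herm_form[OF sa] by (simp add: X_def)
  then have X_c': "X = pstar c * pstar r1 + c * pstar r2"
    using X_c by (metis pstar_add pstar_mult pstar_pstar)
  have "\<rho> * c + pstar (\<rho> * c) = smult (1/2) ((c * r1 + pstar c * r2) + (pstar c * pstar r1 + c * pstar r2))"
    by (simp add: \<rho>_def algebra_simps smult_add_right)
  also have "\<dots> = X"
    using smult_half_double[OF two, of X] by (simp flip: X_c X_c')
  finally have "\<rho> * c + pstar (\<rho> * c) = X" .
  moreover have "herm_form n A (\<lambda>k. 1 * z k + pstar \<rho> * e k) = herm_form n A z + (\<rho> * c + pstar (\<rho> * c))"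
    using iso herm_prod_commute[OF sa, of z e]
    unfolding herm_form_eq_herm_prod herm_prod_lin_left herm_prod_lin_right
    by (simp add: c_def algebra_simps)
  ultimately show ?thesis
    by (auto simp: X_def)
qed

lemma pstar_X_power: "pstar ([:0, 1:] ^ j) = smult ((-1) ^ j) ([:0, 1:] ^ j)"
proof -
  have "pstar ([:0, 1:] ^ j) = smult (-1) [:0, 1:] ^ j"
    by (simp add: minus_pCons[symmetric])
  also have "\<dots> = smult ((-1) ^ j) ([:0, 1:] ^ j)"
    by (rule smult_power)
  finally show ?thesis .
qed

lemma X_power_dvd_pstar: "[:0, 1:] ^ j dvd p \<Longrightarrow> [:0, 1:] ^ j dvd pstar p"
  by (auto simp only: pstar_mult pstar_X_power mult_smult_left dvd_smult dvd_triv_left elim!: dvdE)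

lemma ex_norm_inverse_mod_X_power:
  fixes d :: "'a::{alg_closed_field,field_gcd} poly"
  assumes two: "(2::'a) \<noteq> 0" and "pstar d = d" and "j = 0 \<or> poly d 0 \<noteq> 0"
  shows "\<exists>z. half_roots z \<and> poly z 0 \<noteq> 0 \<and> [:0, 1:] ^ j dvd 1 - d * (pstar z * z)"
proof -
  obtain h where h: "pstar h = h" "poly h 0 \<noteq> 0" "[:0, 1:] ^ j dvd 1 - d * h"
  proof (cases "j = 0")
    case True
    then show ?thesis
      by (intro that[of 1]) simp_all
  next
    case False
    define T :: "'a poly" where "T = [:0, 1:] ^ j"
    have "\<exists>u v. u * d + v * T = 1"
      using assms(3) False by (intro bezout_if_no_common_root) (auto simp: T_def)
    then obtain u v where "u * d + v * T = 1"
      by blast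
    then have du: "1 - d * u = T * v"
      by algebra
    then have "T dvd pstar (1 - d * u)"
      unfolding T_def by (intro X_power_dvd_pstar) simp
    moreover have "1 - d * (pstar u * d * u) = (1 - d * u) + d * u * pstar (1 - d * u)"
      using assms(2) by (simp add: algebra_simps)
    ultimately have "T dvd 1 - d * (pstar u * d * u)"
      by (simp only:) (intro dvd_add dvd_mult; simp add: du)
    moreover have "poly (1 - d * u) 0 = 0"
      using False by (simp add: du T_def)
    then have "poly (pstar u * d * u) 0 \<noteq> 0"
      by auto
    moreover have "pstar (pstar u * d * u) = pstar u * d * u"
      using assms(2) by (simp add: mult_ac)
    ultimately show ?thesis
      using that unfolding T_def by blast
  qed
  obtain z where "pstar z * z = h" "half_roots z"
    using pstar_invariant_eq_norm[OF two h(1,2)] by blast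
  moreover from this have "poly z 0 \<noteq> 0"
    using h(2) by (auto simp: poly_norm_0)
  ultimately show ?thesis
    using h(3) by blast
qed

lemma pstar_invariant_eq_norm_X_power:
  fixes E :: "'a::alg_closed_field poly"
  assumes two: "(2::'a) \<noteq> 0" and "pstar E = E" and "E \<noteq> 0"
  shows "\<exists>j zp w \<kappa>. half_roots zp \<and> poly zp 0 \<noteq> 0 \<and> pstar w * w = E \<and> poly w 0 \<noteq> 1 \<and>
           \<kappa> \<noteq> 0 \<and> pstar w = smult \<kappa> ([:0, 1:] ^ j * zp)"
proof -
  obtain j E1 where E: "E = [:0, 0, 1:] ^ j * E1" "pstar E1 = E1" "poly E1 0 \<noteq> 0"
    using pstar_invariant_split_X_power[OF assms] by blast
  obtain zp where zp: "pstar zp * zp = E1" "half_roots zp"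
    using pstar_invariant_eq_norm[OF two E(2,3)] by blast
  have "poly zp 0 \<noteq> 0"
    using E(3) by (simp flip: zp(1) add: poly_norm_0)
  define i where "i = sqrt_choice (-1 :: 'a)"
  define w0 where "w0 = [:0, i:] ^ j * pstar zp"
  have "pstar w0 = smult (- i) [:0, 1:] ^ j * zp"
    by (simp add: w0_def)
  then have pw0: "pstar w0 = smult ((- i) ^ j) ([:0, 1:] ^ j * zp)"
    by (simp only: smult_power mult_smult_left)
  have "[:0, - i:] * [:0, i:] = [:0, 0, 1:]"
    by (simp add: i_def)
  then have nw0: "pstar w0 * w0 = E"
    by (simp add: E(1) w0_def power_mult_distrib[symmetric] zp(1)[symmetric] mult_ac)
  obtain \<epsilon> :: 'a where "\<epsilon> * \<epsilon> = 1" and "poly (smult \<epsilon> w0) 0 \<noteq> 1"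
  proof (cases "poly w0 0 = 1")
    case True
    have "(-1::'a) \<noteq> 1"
      using two by (metis one_add_one neg_eq_iff_add_eq_0)
    with True show ?thesis
      by (intro that[of "-1"]) simp_all
  qed (intro that[of 1]; simp)
  moreover have "pstar (smult \<epsilon> w0) * smult \<epsilon> w0 = E"
    by (simp only: pstar_smult mult_smult_left mult_smult_right smult_smult \<open>\<epsilon> * \<epsilon> = 1\<close>
        smult_1_left nw0)
  moreover have "pstar (smult \<epsilon> w0) = smult (\<epsilon> * (- i) ^ j) ([:0, 1:] ^ j * zp)"
    by (simp only: pstar_smult pw0 smult_smult)
  moreover have "\<epsilon> * (- i) ^ j \<noteq> 0"
    using \<open>\<epsilon> * \<epsilon> = 1\<close> by (auto simp: i_def)
  ultimately show ?thesis
    using zp(2) \<open>poly zp 0 \<noteq> 0\<close> by blast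
qed

definition twist :: "'a::comm_ring_1 \<Rightarrow> 'a poly \<Rightarrow> 'a poly" where
  "twist \<tau> w = [:1, - \<tau>:] - [:1, \<tau>:] * w"

lemma poly_twist: "poly (twist \<tau> w) b = (1 - \<tau> * b) - (1 + \<tau> * b) * poly w b"
  by (simp add: twist_def algebra_simps)

lemma twist_eq_pstar_diff: "twist \<tau> w = pstar [:1, \<tau>:] - [:1, \<tau>:] * w"
  by (simp add: twist_def pstar_pCons)

lemma infinite_UNIV_alg_closed: "infinite (UNIV :: 'a::alg_closed_field set)"
proof
  assume fin: "finite (UNIV :: 'a set)"
  define P where "P = (\<Prod>x\<in>(UNIV :: 'a set). [:-x, 1:])"
  have root: "poly P x = 0" for x
    unfolding P_def poly_prod using fin by (intro prod_zero) auto
  have "degree P \<noteq> 0"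
    using fin by (simp add: P_def degree_prod_eq_sum_degree)
  then have "degree (P + 1) > 0"
    by (simp add: degree_add_eq_left)
  then obtain z where "poly (P + 1) z = 0"
    using alg_closed_imp_poly_has_root by blast
  with root[of z] show False
    by simp
qed

lemma ex_twist_nonzero_on:
  fixes S :: "'a::alg_closed_field set"
  assumes two: "(2::'a) \<noteq> 0" and "finite S" and "0 \<notin> S"
  shows "\<exists>\<tau>. \<forall>b\<in>S. poly (twist \<tau> w) b \<noteq> 0"
proof -
  have "{\<tau>. poly (twist \<tau> w) b = 0} \<subseteq> {(1 - poly w b) / (b * (1 + poly w b))}" if "b \<in> S" for b
  proof
    fix \<tau>
    assume "\<tau> \<in> {\<tau>. poly (twist \<tau> w) b = 0}"
    then have eq: "1 - poly w b = \<tau> * (b * (1 + poly w b))"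
      by (simp add: poly_twist algebra_simps)
    moreover have "1 + poly w b \<noteq> 0"
    proof
      assume "1 + poly w b = 0"
      with eq have "(2::'a) = 0"
        by (simp add: algebra_simps eq_neg_iff_add_eq_0)
      with two show False ..
    qed
    moreover have "b \<noteq> 0"
      using \<open>0 \<notin> S\<close> that by blast
    ultimately show "\<tau> \<in> {(1 - poly w b) / (b * (1 + poly w b))}"
      by (simp add: eq_divide_eq)
  qed
  then have "finite (\<Union>b\<in>S. {\<tau>. poly (twist \<tau> w) b = 0})"
    using \<open>finite S\<close> by (blast intro: finite_subset)
  then obtain \<tau> where "\<tau> \<notin> (\<Union>b\<in>S. {\<tau>. poly (twist \<tau> w) b = 0})"
    using ex_new_if_finite[OF infinite_UNIV_alg_closed] by blast
  then show ?thesis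
    by blast
qed

lemma twist_opposite_roots:
  fixes w :: "'a::field poly"
  assumes two: "(2::'a) \<noteq> 0"
    and "poly (twist \<tau> w) b = 0" and "poly (twist \<tau> w) (- b) = 0"
  shows "poly (pstar w * w) b = 1"
proof -
  have eq1: "1 - \<tau> * b = (1 + \<tau> * b) * poly w b"
    and eq2: "1 + \<tau> * b = (1 - \<tau> * b) * poly w (- b)"
    using assms(2,3) by (simp_all add: poly_twist)
  have "1 - \<tau> * b \<noteq> 0"
  proof
    assume "1 - \<tau> * b = 0"
    with eq2 have "(1 - \<tau> * b) + (1 + \<tau> * b) = 0"
      by simp
    with two show False
      by simp
  qed
  moreover have "(1 - \<tau> * b) * (poly w (- b) * poly w b) = 1 - \<tau> * b"
    using eq1 eq2 by (metis mult.assoc mult.commute)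
  ultimately show ?thesis
    by simp
qed

lemma mult_no_opposite_roots:
  fixes Z m :: "'a::alg_closed_field poly"
  assumes two: "(2::'a) \<noteq> 0" and Z: "half_roots Z" "poly Z 0 \<noteq> 0"
    and Z_m: "\<And>r. poly Z r = 0 \<Longrightarrow> poly m (- r) \<noteq> 0"
    and m_m: "\<And>b. poly m b = 0 \<Longrightarrow> poly m (- b) \<noteq> 0"
    and "poly (Z * m) b = 0"
  shows "poly (Z * m) (- b) \<noteq> 0"
  using assms(6) half_roots_opposite_root[OF two Z, of b] Z_m[of b] Z_m[of "- b"] m_m[of b]
  by auto

lemma ex_twist_bezout:
  fixes Z w :: "'a::{alg_closed_field,field_gcd} poly"
  assumes two: "(2::'a) \<noteq> 0" and Z: "half_roots Z" "poly Z 0 \<noteq> 0"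
    and w: "poly w 0 \<noteq> 1" "pstar w * w \<noteq> 1"
  shows "\<exists>\<tau> u1 u2. u1 * (Z * twist \<tau> w) + u2 * pstar (Z * twist \<tau> w) = 1"
proof -
  define S where "S = uminus ` {r. poly Z r = 0} \<union> {b. b \<noteq> 0 \<and> poly (pstar w * w - 1) b = 0}"
  have "Z \<noteq> 0" "pstar w * w - 1 \<noteq> 0"
    using Z(2) w(2) by auto
  have "finite (uminus ` {r. poly Z r = 0})"
    using poly_roots_finite[OF \<open>Z \<noteq> 0\<close>] by simp
  moreover have "finite {b. b \<noteq> 0 \<and> poly (pstar w * w - 1) b = 0}"
    using poly_roots_finite[OF \<open>pstar w * w - 1 \<noteq> 0\<close>] by (rule finite_subset[rotated]) auto
  ultimately have "finite S"
    by (simp add: S_def)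
  moreover have "0 \<notin> S"
    using Z(2) by (auto simp: S_def)
  ultimately obtain \<tau> where \<tau>: "\<And>b. b \<in> S \<Longrightarrow> poly (twist \<tau> w) b \<noteq> 0"
    using ex_twist_nonzero_on[OF two, of S w] by blast
  have m_m: "poly (twist \<tau> w) (- b) \<noteq> 0" if "poly (twist \<tau> w) b = 0" for b
  proof
    assume "poly (twist \<tau> w) (- b) = 0"
    with that have "poly (pstar w * w) b = 1"
      by (rule twist_opposite_roots[OF two])
    moreover have "poly (twist \<tau> w) 0 \<noteq> 0"
      using w(1) by (simp add: poly_twist)
    ultimately show False
      using that \<tau>[of b] by (auto simp: S_def)
  qed
  have Z_m: "poly (twist \<tau> w) (- r) \<noteq> 0" if "poly Z r = 0" for r
    using that \<tau>[of "- r"] by (simp add: S_def)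
  have "poly (pstar (Z * twist \<tau> w)) b \<noteq> 0" if "poly (Z * twist \<tau> w) b = 0" for b
    unfolding poly_pstar by (rule mult_no_opposite_roots[OF two Z Z_m m_m that])
  moreover from this have "Z * twist \<tau> w \<noteq> 0"
    by (metis poly_0 pstar_0)
  ultimately show ?thesis
    using bezout_if_no_common_root by blast
qed

lemma isotropic_combination:
  fixes A :: "nat \<Rightarrow> nat \<Rightarrow> 'a::comm_ring_1 poly" and V :: "'a poly"
  assumes sa: "self_adjoint n A" and xy: "herm_prod n A x y = 1"
    and w: "pstar w * w = 1 - herm_form n A x * herm_form n A y"
  defines "e \<equiv> \<lambda>l. (V * w - pstar V) * x l + (herm_form n A x * pstar V) * y l"
  shows "herm_form n A e = 0" and "herm_prod n A e y = pstar w * (pstar V - V * w)"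
proof -
  define a where "a = herm_form n A x"
  define d where "d = herm_form n A y"
  define P where "P = V * w - pstar V"
  have a: "pstar a = a" "herm_prod n A x x = a" and d: "pstar d = d" "herm_prod n A y y = d"
    using pstar_herm_form[OF sa] by (simp_all add: a_def d_def herm_form_eq_herm_prod)
  have yx: "herm_prod n A y x = 1"
    using herm_prod_commute[OF sa, of y x] xy by simp
  have w': "pstar w * w = 1 - a * d"
    using w by (simp add: a_def d_def)
  have "herm_form n A e = pstar P * (P * a + a * pstar V) + a * V * (P + a * pstar V * d)"
    unfolding herm_form_eq_herm_prod e_def herm_prod_lin_left herm_prod_lin_right
    by (simp add: a d xy yx P_def a_def[symmetric])
  also have "\<dots> = a * V * pstar V * (pstar w * w - 1 + a * d)"
    by (simp add: P_def algebra_simps)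
  finally show "herm_form n A e = 0"
    by (simp add: w')
  have "herm_prod n A e y = pstar P + a * V * d"
    unfolding e_def herm_prod_lin_left by (simp add: a xy d P_def a_def[symmetric])
  also have "a * V * d = V * (1 - pstar w * w)"
    unfolding w' by (simp add: mult_ac)
  also have "pstar P + V * (1 - pstar w * w) = pstar w * (pstar V - V * w)"
    by (simp add: P_def algebra_simps)
  finally show "herm_prod n A e y = pstar w * (pstar V - V * w)" .
qed

lemma herm_form_eq_1_if_isotropic_coprime:
  fixes A :: "nat \<Rightarrow> nat \<Rightarrow> 'a::field poly"
  assumes two: "(2::'a) \<noteq> 0" and sa: "self_adjoint n A"
    and iso: "herm_form n A e = 0"
    and c: "herm_prod n A e z = smult \<kappa> ([:0, 1:] ^ j * P)" and "\<kappa> \<noteq> 0"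
    and P: "u1 * P + u2 * pstar P = 1"
    and T: "[:0, 1:] ^ j dvd 1 - herm_form n A z"
  shows "\<exists>v. herm_form n A v = 1"
proof -
  define T :: "'a poly" where "T = [:0, 1:] ^ j"
  obtain g where g: "1 - herm_form n A z = T * g"
    using T by (auto simp: T_def elim: dvdE)
  define c where "c = herm_prod n A e z"
  have "c * smult (1 / \<kappa>) (g * u1) = T * g * (u1 * P)"
    using \<open>\<kappa> \<noteq> 0\<close> by (simp add: c c_def T_def mult_ac)
  moreover have "pstar c = smult (\<kappa> * (-1) ^ j) (T * pstar P)"
    unfolding c_def c T_def by (simp only: pstar_smult pstar_mult pstar_X_power mult_smult_left smult_smult)
  then have "pstar c * smult (1 / (\<kappa> * (-1) ^ j)) (g * u2) = T * g * (u2 * pstar P)"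
    using \<open>\<kappa> \<noteq> 0\<close> by (simp add: mult_ac)
  ultimately have "1 - herm_form n A z = c * smult (1 / \<kappa>) (g * u1)
      + pstar c * smult (1 / (\<kappa> * (-1) ^ j)) (g * u2)"
    by (simp add: g P flip: distrib_left)
  then show ?thesis
    unfolding c_def by (rule herm_form_eq_1_if_isotropic[OF two sa iso])
qed

lemma herm_form_eq_1_nonsingular_case:
  fixes A :: "nat \<Rightarrow> nat \<Rightarrow> 'a::{alg_closed_field,field_gcd} poly"
  assumes two: "(2::'a) \<noteq> 0" and sa: "self_adjoint n A" and xy: "herm_prod n A x y = 1"
    and ad: "herm_form n A x * herm_form n A y \<noteq> 0" "herm_form n A x * herm_form n A y \<noteq> 1"
  shows "\<exists>v. herm_form n A v = 1"
proof -
  define a where "a = herm_form n A x"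
  define d where "d = herm_form n A y"
  have "pstar (1 - a * d) = 1 - a * d" "1 - a * d \<noteq> 0"
    using ad pstar_herm_form[OF sa] by (simp_all add: a_def d_def)
  then obtain j zp w \<kappa> where zp: "half_roots zp" "poly zp 0 \<noteq> 0"
    and w: "pstar w * w = 1 - a * d" "poly w 0 \<noteq> 1"
    and \<kappa>: "\<kappa> \<noteq> 0" "pstar w = smult \<kappa> ([:0, 1:] ^ j * zp)"
    using pstar_invariant_eq_norm_X_power[OF two] by blast
  have "poly (1 - a * d) 0 = 0" if "j \<noteq> 0"
    using that poly_pstar[of w 0] by (simp add: \<kappa>(2) flip: w(1))
  then have "j = 0 \<or> poly d 0 \<noteq> 0"
    by auto
  then obtain zh where zh: "half_roots zh" "poly zh 0 \<noteq> 0"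
    "[:0, 1:] ^ j dvd 1 - d * (pstar zh * zh)"
    using ex_norm_inverse_mod_X_power[OF two] pstar_herm_form[OF sa] unfolding d_def by blast
  have "pstar w * w \<noteq> 1"
    using w(1) ad(1) by (simp add: a_def d_def)
  then obtain \<tau> u1 u2 where P: "u1 * (zh * zp * twist \<tau> w) + u2 * pstar (zh * zp * twist \<tau> w) = 1"
    using ex_twist_bezout[OF two _ _ w(2), of "zh * zp"] zh zp by (auto simp: half_roots_mult)
  define e where "e = (\<lambda>l. ([:1, \<tau>:] * w - pstar [:1, \<tau>:]) * x l + (a * pstar [:1, \<tau>:]) * y l)"
  have e: "herm_form n A e = 0" "herm_prod n A e y = pstar w * twist \<tau> w"
    using isotropic_combination[OF sa xy, of w "[:1, \<tau>:]"] w(1)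
    by (simp_all add: e_def a_def d_def twist_eq_pstar_diff)
  define z where "z = (\<lambda>l. zh * y l)"
  have "herm_prod n A e z = smult \<kappa> ([:0, 1:] ^ j * (zh * zp * twist \<tau> w))"
    by (simp add: z_def herm_prod_scale_right e(2) \<kappa>(2) mult_ac)
  moreover have "herm_form n A z = d * (pstar zh * zh)"
    by (simp add: z_def herm_form_eq_herm_prod herm_prod_scale_left herm_prod_scale_right d_def mult_ac)
  ultimately show ?thesis
    using herm_form_eq_1_if_isotropic_coprime[OF two sa e(1) _ \<kappa>(1) P] zh(3) by simp
qed

lemma herm_form_eq_1_if_herm_prod_eq_1:
  fixes A :: "nat \<Rightarrow> nat \<Rightarrow> 'a::{alg_closed_field,field_gcd} poly"
  assumes two: "(2::'a) \<noteq> 0" and sa: "self_adjoint n A" and xy: "herm_prod n A x y = 1"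
  shows "\<exists>v. herm_form n A v = 1"
proof -
  define a where "a = herm_form n A x"
  define d where "d = herm_form n A y"
  have yx: "herm_prod n A y x = 1"
    using herm_prod_commute[OF sa, of y x] xy by simp
  consider "a = 0" | "d = 0" | "a * d = 1" | "a * d \<noteq> 0" "a * d \<noteq> 1"
    by auto
  then show ?thesis
  proof cases
    case 1
    then show ?thesis
      using herm_form_eq_1_if_isotropic[OF two sa, of x y "1 - d" 0] xy by (simp add: a_def d_def)
  next
    case 2
    then show ?thesis
      using herm_form_eq_1_if_isotropic[OF two sa, of y x "1 - a" 0] yx by (simp add: a_def d_def)
  next
    case 3
    then have "is_unit a"
      by (metis dvdI)
    then obtain c where c: "a = [:c:]" "c \<noteq> 0"
      by (metis is_unit_iff_degree is_unit_poly_iff not_is_unit_0 pCons_eq_0_iff)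
    define k where "k = sqrt_choice (1 / c)"
    have "herm_form n A (\<lambda>l. [:k:] * x l) = [:k:] * [:k:] * a"
      unfolding a_def herm_form_eq_herm_prod herm_prod_scale_left herm_prod_scale_right by simp
    also have "\<dots> = [:k * k * c:]"
      by (simp add: c(1))
    also have "\<dots> = 1"
      using c(2) by (simp add: k_def one_pCons)
    finally show ?thesis
      by blast
  next
    case 4
    then show ?thesis
      using herm_form_eq_1_nonsingular_case[OF two sa xy] by (simp add: a_def d_def)
  qed
qed

theorem proposition4p1:
  fixes A :: "nat \<Rightarrow> nat \<Rightarrow> 'a::{alg_closed_field,field_gcd} poly" and n :: nat
  assumes "(2::'a) \<noteq> 0"
    and "self_adjoint n A"
    and "mat_gcd n A = 1"
  shows "\<exists>v :: nat \<Rightarrow> 'a poly. herm_form n A v = 1"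
proof -
  obtain x y where "herm_prod n A x y = 1"
    using herm_prod_eq_1_if_mat_gcd_eq_1[OF assms(3)] by blast
  then show ?thesis
    by (rule herm_form_eq_1_if_herm_prod_eq_1[OF assms(1,2)])
qed

end
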